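(* The closure operator $\texttt{simclo}$ is compatible with $\texttt{feF}$: for every $R\subseteq\mathcal{S}_1\times\mathcal{S}_2\times\mathcal{P}(\mathcal{E}_1^\omega\times\mathcal{E}_2^\omega)$, $\texttt{simclo}(\texttt{feF}(R))\subseteq\texttt{feF}(\texttt{simclo}(R))$.
   Context: Two LTSs $\mathit{TS}_i=(\mathcal{S}_i,\mathcal{E}_i,\mathcal{I}_i,\to_i)$, where $\to_i\subseteq\mathcal{S}_i\times(\mathcal{E}_i\cup\{\emptyset\})\times\mathcal{S}_i$ and $\emptyset$ marks silent steps; $s\overset{e}{\rightsquigarrow}s'$ means $s\to^*s''\xrightarrow{e}s'$ with $\to^*$ the reflexive transitive closure of silent steps. Derivative $\Delta_{e_1,e_2}(\psi)=\{(\tau_1,\tau_2)\mid(e_1\tau_1,e_2\tau_2)\in\psi\}$. $\texttt{feF}(R)=\{(s_1,s_2,\psi)\mid\forall e_1,s_1'.\ s_1\overset{e_1}{\rightsquigarrow}_1s_1'\Rightarrow\exists e_2,s_2'.\ s_2\overset{e_2}{\rightsquigarrow}_2s_2'\wedge\Delta_{e_1,e_2}(\psi)\neq\emptyset\wedge(s_1',s_2',\Delta_{e_1,e_2}(\psi))\in R\}$. For a single LTS with states $\mathcal{S}$, $\texttt{sim}\subseteq\mathcal{S}\times\mathcal{S}$ is the greatest fixed point of $\texttt{simF}(R)=\{(q,s)\mid\forall e,q'.\ q\overset{e}{\rightsquigarrow}q'\Rightarrow\exists s'.\ s\overset{e}{\rightsquigarrow}s'\wedge(q',s')\in R\}$;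 $\texttt{sim}_i$ denotes it for $\mathit{TS}_i$. $\texttt{simclo}(H)=\{(s_1,s_2,\psi)\mid\exists s_1',s_2'.\ (s_1,s_1')\in\texttt{sim}_1\wedge(s_2',s_2)\in\texttt{sim}_2\wedge(s_1',s_2',\psi)\in H\}$. *)

theory Defs
  imports Main "HOL-Library.Stream"
begin

text \<open>An LTS is given by its transition relation; a silent step is labelled None
  (the paper's empty label), a visible step with event e is labelled Some e.\<close>

type_synonym ('s, 'e) lts = "('s \<times> 'e option \<times> 's) set"

definition silent :: "('s, 'e) lts \<Rightarrow> ('s \<times> 's) set" where
  "silent T = {(s, s'). (s, None, s') \<in> T}"

definition wstep :: "('s, 'e) lts \<Rightarrow> 's \<Rightarrow> 'e \<Rightarrow> 's \<Rightarrow> bool" where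
  "wstep T s e s' \<longleftrightarrow> (\<exists>s''. (s, s'') \<in> (silent T)\<^sup>* \<and> (s'', Some e, s') \<in> T)"

definition deriv :: "'e1 \<Rightarrow> 'e2 \<Rightarrow> ('e1 stream \<times> 'e2 stream) set \<Rightarrow> ('e1 stream \<times> 'e2 stream) set" where
  "deriv e1 e2 \<psi> = {(\<tau>1, \<tau>2). (e1 ## \<tau>1, e2 ## \<tau>2) \<in> \<psi>}"

definition feF :: "('s1, 'e1) lts \<Rightarrow> ('s2, 'e2) lts \<Rightarrow>
    ('s1 \<times> 's2 \<times> ('e1 stream \<times> 'e2 stream) set) set \<Rightarrow>
    ('s1 \<times> 's2 \<times> ('e1 stream \<times> 'e2 stream) set) set" where
  "feF T1 T2 R = {(s1, s2, \<psi>). \<forall>e1 s1'. wstep T1 s1 e1 s1' \<longrightarrow>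
      (\<exists>e2 s2'. wstep T2 s2 e2 s2' \<and> deriv e1 e2 \<psi> \<noteq> {} \<and> (s1', s2', deriv e1 e2 \<psi>) \<in> R)}"

definition simF :: "('s, 'e) lts \<Rightarrow> ('s \<times> 's) set \<Rightarrow> ('s \<times> 's) set" where
  "simF T R = {(q, s). \<forall>e q'. wstep T q e q' \<longrightarrow> (\<exists>s'. wstep T s e s' \<and> (q', s') \<in> R)}"

definition sim :: "('s, 'e) lts \<Rightarrow> ('s \<times> 's) set" where
  "sim T = gfp (simF T)"

definition simclo :: "('s1, 'e1) lts \<Rightarrow> ('s2, 'e2) lts \<Rightarrow>
    ('s1 \<times> 's2 \<times> ('e1 stream \<times> 'e2 stream) set) set \<Rightarrow>
    ('s1 \<times> 's2 \<times> ('e1 stream \<times> 'e2 stream) set) set" where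
  "simclo T1 T2 H = {(s1, s2, \<psi>). \<exists>s1' s2'. (s1, s1') \<in> sim T1 \<and> (s2', s2) \<in> sim T2 \<and> (s1', s2', \<psi>) \<in> H}"

end

theory Submission
  imports Defs
begin

text \<open>Let s1 be simulated by s1', s2' by s2, and (s1', s2', \<psi>) \<in> feF R. A weak step of s1
  is copied by s1'; feF R answers it from s2' with a step whose label keeps the derivative
  of \<psi> nonempty, and s2 copies that answer. The successor states are again related
  through sim on both sides, so the new triple lies in the closure of R.\<close>

lemma mono_simF: "mono (simF T)"
  unfolding mono_def simF_def by blast

lemma sim_wstep:
  assumes "(q, s) \<in> sim T" and "wstep T q e q'"
  obtains s' where "wstep T s e s'" and "(q', s') \<in> sim T"
proof -
  have "sim T = simF T (sim T)"
    unfolding sim_def by (rule gfp_unfold[OF mono_simF])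
  with assms that show thesis
    unfolding simF_def by blast
qed

lemma feF_wstep:
  assumes "(s1, s2, \<psi>) \<in> feF T1 T2 R" and "wstep T1 s1 e1 s1'"
  obtains e2 s2' where "wstep T2 s2 e2 s2'" and "deriv e1 e2 \<psi> \<noteq> {}"
    and "(s1', s2', deriv e1 e2 \<psi>) \<in> R"
  using assms unfolding feF_def by blast

lemma simcloI:
  assumes "(s1, s1') \<in> sim T1" and "(s2', s2) \<in> sim T2" and "(s1', s2', \<psi>) \<in> H"
  shows "(s1, s2, \<psi>) \<in> simclo T1 T2 H"
  using assms unfolding simclo_def by blast

lemma simcloE:
  assumes "(s1, s2, \<psi>) \<in> simclo T1 T2 H"
  obtains s1' s2' where "(s1, s1') \<in> sim T1" and "(s2', s2) \<in> sim T2"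
    and "(s1', s2', \<psi>) \<in> H"
  using assms unfolding simclo_def by blast

theorem mainTheorem8:
  fixes T1 :: "('s1, 'e1) lts" and T2 :: "('s2, 'e2) lts"
    and R :: "('s1 \<times> 's2 \<times> ('e1 stream \<times> 'e2 stream) set) set"
  shows "simclo T1 T2 (feF T1 T2 R) \<subseteq> feF T1 T2 (simclo T1 T2 R)"
proof (clarify)
  fix s1 s2 \<psi>
  assume "(s1, s2, \<psi>) \<in> simclo T1 T2 (feF T1 T2 R)"
  then obtain s1' s2' where sim1: "(s1, s1') \<in> sim T1" and sim2: "(s2', s2) \<in> sim T2"
    and game: "(s1', s2', \<psi>) \<in> feF T1 T2 R"
    by (rule simcloE)
  have "\<exists>e2 t2. wstep T2 s2 e2 t2 \<and> deriv e1 e2 \<psi> \<noteq> {} \<and> (t1, t2, deriv e1 e2 \<psi>) \<in> simclo T1 T2 R"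
    if step: "wstep T1 s1 e1 t1" for e1 t1
  proof -
    obtain t1' where "wstep T1 s1' e1 t1'" and "(t1, t1') \<in> sim T1"
      using sim_wstep[OF sim1 step] .
    obtain e2 t2' where "wstep T2 s2' e2 t2'" and nonempty: "deriv e1 e2 \<psi> \<noteq> {}"
      and "(t1', t2', deriv e1 e2 \<psi>) \<in> R"
      using feF_wstep[OF game \<open>wstep T1 s1' e1 t1'\<close>] .
    obtain t2 where "wstep T2 s2 e2 t2" and "(t2', t2) \<in> sim T2"
      using sim_wstep[OF sim2 \<open>wstep T2 s2' e2 t2'\<close>] .
    have "(t1, t2, deriv e1 e2 \<psi>) \<in> simclo T1 T2 R"
      using \<open>(t1, t1') \<in> sim T1\<close> \<open>(t2', t2) \<in> sim T2\<close>
        \<open>(t1', t2', deriv e1 e2 \<psi>) \<in> R\<close> by (rule simcloI)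
    with \<open>wstep T2 s2 e2 t2\<close> nonempty show ?thesis
      by blast
  qed
  then show "(s1, s2, \<psi>) \<in> feF T1 T2 (simclo T1 T2 R)"
    unfolding feF_def by blast
qed

end
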